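(* Let $\mathsf a\in\mathbb R^k$ and $\mathsf b\in\mathbb R^l$ be independent random vectors whose joint distribution satisfies $\mu_{\mathsf a}\times\mu_{\mathsf b}\ll\lambda^{k+l}$. Then the random vector $\mathsf a\otimes\mathsf b\in\mathbb R^{kl}$ is $(k+l-1)$-analytic.
   Context: $\otimes$ denotes the Kronecker product. For differentiable $h\colon\mathbb R^p\to\mathbb R^q$ with differential $Dh(\mathbf v)\in\mathbb R^{q\times p}$, $Jh(\mathbf v)=\sqrt{\det(Dh(\mathbf v)^TDh(\mathbf v))}$ if $q\ge p$ and $\sqrt{\det(Dh(\mathbf v)Dh(\mathbf v)^T)}$ otherwise. A Borel measure $\mu$ on $\mathbb R^m$ is $s$-analytic ($s\in\{1,\dots,m\}$) if for every Borel $\mathcal U\subseteq\mathbb R^m$ with $\mu(\mathcal U)>0$ there exist a Borel set $\mathcal A\subseteq\mathbb R^s$ with $\lambda^s(\mathcal A)>0$ and a real analytic $h\colon\mathbb R^s\to\mathbb R^m$ with $Jh$ not identically zero such that $h(\mathcal A)\subseteq\mathcal U$. A random vector is $s$-analytic if its distribution is $s$-analytic. *)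

theory Defs
  imports "HOL-Probability.Probability" "HOL-Combinatorics.Permutations"
begin

abbreviation RR :: "nat \<Rightarrow> (nat \<Rightarrow> real) set" where
  "RR n \<equiv> PiE {..<n} (\<lambda>_. UNIV)"

abbreviation borel_n :: "nat \<Rightarrow> (nat \<Rightarrow> real) measure" where
  "borel_n n \<equiv> PiM {..<n} (\<lambda>_. borel)"

abbreviation lebesgue_n :: "nat \<Rightarrow> (nat \<Rightarrow> real) measure" where
  "lebesgue_n n \<equiv> PiM {..<n} (\<lambda>_. lborel)"

definition kron :: "nat \<Rightarrow> nat \<Rightarrow> (nat \<Rightarrow> real) \<Rightarrow> (nat \<Rightarrow> real) \<Rightarrow> (nat \<Rightarrow> real)" where
  "kron k l a b = (\<lambda>n. if n < k * l then a (n div l) * b (n mod l) else undefined)"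

definition real_analytic :: "nat \<Rightarrow> nat \<Rightarrow> ((nat \<Rightarrow> real) \<Rightarrow> (nat \<Rightarrow> real)) \<Rightarrow> bool" where
  "real_analytic s m h \<longleftrightarrow>
     (\<forall>x0 \<in> RR s. \<exists>r>0. \<forall>j<m. \<exists>c :: (nat \<Rightarrow> nat) \<Rightarrow> real.
        \<forall>x \<in> RR s. (\<forall>i<s. \<bar>x i - x0 i\<bar> < r) \<longrightarrow>
          ((\<lambda>\<alpha>. c \<alpha> * (\<Prod>i<s. (x i - x0 i) ^ \<alpha> i)) has_sum h x j) {\<alpha>. \<forall>i. i \<ge> s \<longrightarrow> \<alpha> i = 0})"

definition Dmat :: "nat \<Rightarrow> ((nat \<Rightarrow> real) \<Rightarrow> (nat \<Rightarrow> real)) \<Rightarrow> (nat \<Rightarrow> real) \<Rightarrow> nat \<Rightarrow> nat \<Rightarrow> real" where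
  "Dmat s h v j i = deriv (\<lambda>t. h (v(i := t)) j) (v i)"

definition detn :: "nat \<Rightarrow> (nat \<Rightarrow> nat \<Rightarrow> real) \<Rightarrow> real" where
  "detn n A = (\<Sum>p | p permutes {..<n}. of_int (sign p) * (\<Prod>i<n. A i (p i)))"

definition Jac :: "nat \<Rightarrow> nat \<Rightarrow> ((nat \<Rightarrow> real) \<Rightarrow> (nat \<Rightarrow> real)) \<Rightarrow> (nat \<Rightarrow> real) \<Rightarrow> real" where
  "Jac s m h v =
     (let D = Dmat s h v in
      if m \<ge> s then sqrt (detn s (\<lambda>i i'. \<Sum>j<m. D j i * D j i'))
      else sqrt (detn m (\<lambda>j j'. \<Sum>i<s. D j i * D j' i)))"

definition s_analytic :: "nat \<Rightarrow> nat \<Rightarrow> (nat \<Rightarrow> real) measure \<Rightarrow> bool" where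
  "s_analytic s m \<mu> \<longleftrightarrow> s \<in> {1..m} \<and>
     (\<forall>U \<in> sets (borel_n m). emeasure \<mu> U > 0 \<longrightarrow>
        (\<exists>A \<in> sets (borel_n s). emeasure (lebesgue_n s) A > 0 \<and>
           (\<exists>h. real_analytic s m h \<and> (\<exists>v \<in> RR s. Jac s m h v \<noteq> 0) \<and> h ` A \<subseteq> U)))"

end

theory Submission
  imports Defs
begin

text \<open>If U has positive probability under a \<otimes> b, then by independence and absolute continuity
  its preimage under the Kronecker map has positive Lebesgue measure in R^k \<times> R^l.
  Disintegrating along the last coordinate c of a (Fubini), some slice with c \<noteq> 0 has positive
  (k + l - 1)-dimensional measure. On that slice the Kronecker map is the quadratic polynomial map
  v \<mapsto> (v_0, ..., v_(k-2), c) \<otimes> (v_(k-1), ..., v_(k+l-2)), which is real analytic; at the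
  basis vector e_(k-1) each coordinate direction moves a different single entry of the product,
  so the Gram matrix of the differential there is diagonal with entries 1 and c^2.\<close>

lemma sets_lebesgue_n: "sets (lebesgue_n n) = sets (borel_n n)"
  by (intro sets_PiM_cong) auto

lemma sigma_finite_lebesgue_n: "sigma_finite_measure (lebesgue_n n)"
proof -
  interpret product_sigma_finite "\<lambda>_. lborel :: real measure" by standard
  show ?thesis by (rule sigma_finite) simp
qed

lemma distr_PiM_reindex_finite:
  fixes N :: "'a measure"
  assumes "sigma_finite_measure N" "finite I" "inj_on f I"
  shows "distr (PiM (f ` I) (\<lambda>_. N)) (PiM I (\<lambda>_. N)) (\<lambda>\<omega>. \<lambda>i\<in>I. \<omega> (f i)) = PiM I (\<lambda>_. N)"
proof -
  interpret product_sigma_finite "\<lambda>_. N"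
    using assms(1) by (simp add: product_sigma_finite_def)
  have meas: "(\<lambda>\<omega>. \<lambda>i\<in>I. \<omega> (f i)) \<in> measurable (PiM (f ` I) (\<lambda>_. N)) (PiM I (\<lambda>_. N))"
    by (rule measurable_restrict) auto
  show ?thesis
  proof (rule PiM_eqI)
    fix A assume A: "\<And>i. i \<in> I \<Longrightarrow> A i \<in> sets N"
    have "(\<lambda>\<omega>. \<lambda>i\<in>I. \<omega> (f i)) -` PiE I A \<inter> space (PiM (f ` I) (\<lambda>_. N))
        = PiE (f ` I) (\<lambda>j. A (the_inv_into I f j))"
      using assms(3) A[THEN sets.sets_into_space]
      by (auto simp: space_PiM PiE_iff the_inv_into_f_f extensional_def) blast
    then have "emeasure (distr (PiM (f ` I) (\<lambda>_. N)) (PiM I (\<lambda>_. N)) (\<lambda>\<omega>. \<lambda>i\<in>I. \<omega> (f i))) (PiE I A)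
        = (\<Prod>j\<in>f ` I. emeasure N (A (the_inv_into I f j)))"
      using assms A by (simp add: emeasure_distr[OF meas] sets_PiM_I_finite emeasure_PiM
          the_inv_into_into)
    also have "\<dots> = (\<Prod>i\<in>I. emeasure N (A i))"
      using assms(3) by (simp add: prod.reindex the_inv_into_f_f)
    finally show "emeasure (distr (PiM (f ` I) (\<lambda>_. N)) (PiM I (\<lambda>_. N)) (\<lambda>\<omega>. \<lambda>i\<in>I. \<omega> (f i))) (PiE I A)
        = (\<Prod>i\<in>I. emeasure N (A i))" .
  qed (use assms in simp_all)
qed

lemma nn_integral_pair_lebesgue_n:
  assumes f: "f \<in> borel_measurable (lebesgue_n m \<Otimes>\<^sub>M lebesgue_n n)"
  shows "(\<integral>\<^sup>+p. f p \<partial>(lebesgue_n m \<Otimes>\<^sub>M lebesgue_n n))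
    = (\<integral>\<^sup>+v. f (restrict v {..<m}, \<lambda>j\<in>{..<n}. v (m + j)) \<partial>lebesgue_n (m + n))"
proof -
  interpret product_sigma_finite "\<lambda>_. lborel :: real measure" by standard
  interpret sigma_finite_measure "lebesgue_n n" by (rule sigma_finite_lebesgue_n)
  define J where "J = {m..<m + n}"
  have J: "J = (+) m ` {..<n}"
    by (simp add: J_def lessThan_atLeast0 add.commute)
  have IJ: "{..<m} \<inter> J = {}" "{..<m} \<union> J = {..<m + n}"
    by (auto simp: J_def)
  have shift: "distr (PiM J (\<lambda>_. lborel)) (lebesgue_n n) (\<lambda>z. \<lambda>j\<in>{..<n}. z (m + j)) = lebesgue_n n"
    unfolding J by (rule distr_PiM_reindex_finite) (auto intro: lborel.sigma_finite_measure_axioms)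
  have "(\<integral>\<^sup>+v. f (restrict v {..<m}, \<lambda>j\<in>{..<n}. v (m + j)) \<partial>lebesgue_n (m + n))
      = (\<integral>\<^sup>+x. \<integral>\<^sup>+z. f (x, \<lambda>j\<in>{..<n}. z (m + j)) \<partial>PiM J (\<lambda>_. lborel) \<partial>lebesgue_n m)"
  proof -
    have "(\<lambda>v. f (restrict v {..<m}, \<lambda>j\<in>{..<n}. v (m + j))) \<in> borel_measurable (PiM ({..<m} \<union> J) (\<lambda>_. lborel))"
      using f unfolding IJ(2) by measurable
    then show ?thesis
      unfolding IJ(2)[symmetric] using IJ(1)
      by (subst product_nn_integral_fold)
        (auto intro!: nn_integral_cong arg_cong[where f = f]
          simp: J_def space_PiM merge_def restrict_def extensional_def PiE_def)
  qed
  also have "\<dots> = (\<integral>\<^sup>+x. \<integral>\<^sup>+y. f (x, y) \<partial>lebesgue_n n \<partial>lebesgue_n m)"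
  proof (rule nn_integral_cong)
    fix x assume "x \<in> space (lebesgue_n m)"
    then have "(\<lambda>y. f (x, y)) \<in> borel_measurable (lebesgue_n n)"
      using f by measurable
    moreover have "(\<lambda>z. \<lambda>j\<in>{..<n}. z (m + j)) \<in> measurable (PiM J (\<lambda>_. lborel)) (lebesgue_n n)"
      by (rule measurable_restrict) (auto simp: J)
    ultimately have "(\<integral>\<^sup>+y. f (x, y) \<partial>distr (PiM J (\<lambda>_. lborel)) (lebesgue_n n) (\<lambda>z. \<lambda>j\<in>{..<n}. z (m + j)))
        = (\<integral>\<^sup>+z. f (x, \<lambda>j\<in>{..<n}. z (m + j)) \<partial>PiM J (\<lambda>_. lborel))"
      by (intro nn_integral_distr) auto
    then show "(\<integral>\<^sup>+z. f (x, \<lambda>j\<in>{..<n}. z (m + j)) \<partial>PiM J (\<lambda>_. lborel)) = (\<integral>\<^sup>+y. f (x, y) \<partial>lebesgue_n n)"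
      by (simp only: shift)
  qed
  also have "\<dots> = (\<integral>\<^sup>+p. f p \<partial>(lebesgue_n m \<Otimes>\<^sub>M lebesgue_n n))"
    using f by (rule nn_integral_fst)
  finally show ?thesis ..
qed

definition slice_embedding :: "nat \<Rightarrow> nat \<Rightarrow> real \<Rightarrow> (nat \<Rightarrow> real) \<Rightarrow> (nat \<Rightarrow> real) \<times> (nat \<Rightarrow> real)" where
  "slice_embedding m n c v = ((restrict v {..<m})(m := c), \<lambda>j\<in>{..<n}. v (m + j))"

lemma measurable_slice_embedding:
  "slice_embedding m n c \<in> measurable (lebesgue_n (m + n)) (lebesgue_n (Suc m) \<Otimes>\<^sub>M lebesgue_n n)"
proof -
  have "(\<lambda>v. (restrict v {..<m})(m := c)) \<in> measurable (lebesgue_n (m + n)) (lebesgue_n (Suc m))"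
    by (rule measurable_fun_upd[where J = "{..<m}"]) (auto intro!: measurable_restrict)
  moreover have "(\<lambda>v. \<lambda>j\<in>{..<n}. v (m + j)) \<in> measurable (lebesgue_n (m + n)) (lebesgue_n n)"
    by (rule measurable_restrict) auto
  ultimately show ?thesis
    unfolding slice_embedding_def by (rule measurable_Pair)
qed

lemma nn_integral_pair_lebesgue_n_slices:
  assumes f: "f \<in> borel_measurable (lebesgue_n (Suc m) \<Otimes>\<^sub>M lebesgue_n n)"
  shows "(\<integral>\<^sup>+p. f p \<partial>(lebesgue_n (Suc m) \<Otimes>\<^sub>M lebesgue_n n))
    = (\<integral>\<^sup>+c. \<integral>\<^sup>+v. f (slice_embedding m n c v) \<partial>lebesgue_n (m + n) \<partial>lborel)"
proof -
  interpret product_sigma_finite "\<lambda>_. lborel :: real measure" by standard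
  interpret L: sigma_finite_measure "lebesgue_n n" by (rule sigma_finite_lebesgue_n)
  have ins: "{..<Suc m} = insert m {..<m}" by auto
  have upd: "(\<lambda>q. f ((fst q)(m := c), snd q)) \<in> borel_measurable (lebesgue_n m \<Otimes>\<^sub>M lebesgue_n n)"
    for c :: real
  proof -
    have "(\<lambda>q. (fst q)(m := c)) \<in> measurable (lebesgue_n m \<Otimes>\<^sub>M lebesgue_n n) (lebesgue_n (Suc m))"
      unfolding ins by (rule measurable_fun_upd[where J = "{..<m}"]) auto
    from measurable_compose[OF measurable_Pair[OF this measurable_snd] f] show ?thesis by simp
  qed
  have "(\<integral>\<^sup>+p. f p \<partial>(lebesgue_n (Suc m) \<Otimes>\<^sub>M lebesgue_n n))
      = (\<integral>\<^sup>+x. \<integral>\<^sup>+y. f (x, y) \<partial>lebesgue_n n \<partial>lebesgue_n (Suc m))"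
    by (rule L.nn_integral_fst[OF f, symmetric])
  also have "\<dots> = (\<integral>\<^sup>+c. \<integral>\<^sup>+x. \<integral>\<^sup>+y. f (x(m := c), y) \<partial>lebesgue_n n \<partial>lebesgue_n m \<partial>lborel)"
    using L.borel_measurable_nn_integral_fst[OF f] unfolding ins
    by (rule product_nn_integral_insert_rev[rotated 2]) simp_all
  also have "\<dots> = (\<integral>\<^sup>+c. \<integral>\<^sup>+q. f ((fst q)(m := c), snd q) \<partial>(lebesgue_n m \<Otimes>\<^sub>M lebesgue_n n) \<partial>lborel)"
    using L.nn_integral_fst[OF upd] by simp
  also have "\<dots> = (\<integral>\<^sup>+c. \<integral>\<^sup>+v. f (slice_embedding m n c v) \<partial>lebesgue_n (m + n) \<partial>lborel)"
    by (rule nn_integral_cong) (simp add: nn_integral_pair_lebesgue_n[OF upd] slice_embedding_def)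
  finally show ?thesis .
qed

lemma exists_nonzero_slice_positive:
  assumes W: "W \<in> sets (lebesgue_n (Suc m) \<Otimes>\<^sub>M lebesgue_n n)"
    and pos: "0 < emeasure (lebesgue_n (Suc m) \<Otimes>\<^sub>M lebesgue_n n) W"
  shows "\<exists>c. c \<noteq> 0 \<and> 0 < emeasure (lebesgue_n (m + n)) (slice_embedding m n c -` W \<inter> space (lebesgue_n (m + n)))"
proof (rule ccontr)
  assume "\<not> ?thesis"
  then have null: "emeasure (lebesgue_n (m + n)) (slice_embedding m n c -` W \<inter> space (lebesgue_n (m + n))) = 0"
    if "c \<noteq> 0" for c
    using that by (auto simp: not_less)
  have "emeasure (lebesgue_n (Suc m) \<Otimes>\<^sub>M lebesgue_n n) W
      = (\<integral>\<^sup>+c. \<integral>\<^sup>+v. indicator W (slice_embedding m n c v) \<partial>lebesgue_n (m + n) \<partial>lborel)"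
    using W by (simp add: nn_integral_pair_lebesgue_n_slices flip: nn_integral_indicator)
  also have "\<dots> = (\<integral>\<^sup>+c. emeasure (lebesgue_n (m + n)) (slice_embedding m n c -` W \<inter> space (lebesgue_n (m + n))) \<partial>lborel)"
  proof (intro nn_integral_cong)
    fix c
    have "slice_embedding m n c -` W \<inter> space (lebesgue_n (m + n)) \<in> sets (lebesgue_n (m + n))"
      using measurable_slice_embedding W by (rule measurable_sets)
    then show "(\<integral>\<^sup>+v. indicator W (slice_embedding m n c v) \<partial>lebesgue_n (m + n))
        = emeasure (lebesgue_n (m + n)) (slice_embedding m n c -` W \<inter> space (lebesgue_n (m + n)))"
      by (auto simp: indicator_def simp flip: nn_integral_indicator intro!: nn_integral_cong)
  qed
  also have "\<dots> = (\<integral>\<^sup>+(c::real). 0 \<partial>lborel)"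
  proof (rule nn_integral_cong_AE)
    show "AE c in lborel. emeasure (lebesgue_n (m + n)) (slice_embedding m n c -` W \<inter> space (lebesgue_n (m + n))) = 0"
      using AE_lborel_singleton[of 0] by eventually_elim (simp add: null)
  qed
  finally show False
    using pos by simp
qed

lemma less_mult_imp_div_mod_less: "n < k * l \<Longrightarrow> n div l < k \<and> n mod l < (l::nat)"
proof -
  assume n: "n < k * l"
  then have "0 < l"
    by (cases l) auto
  with n show ?thesis
    by (simp add: less_mult_imp_div_less)
qed

lemma kron_eq_restrict: "kron k l x y = (\<lambda>n\<in>{..<k * l}. x (n div l) * y (n mod l))"
  by (auto simp: kron_def)

lemma measurable_kron:
  "(\<lambda>p. kron k l (fst p) (snd p)) \<in> measurable (borel_n k \<Otimes>\<^sub>M borel_n l) (borel_n (k * l))"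
  using less_mult_imp_div_mod_less[of _ k l]
  unfolding kron_eq_restrict by (intro measurable_restrict) measurable

lemma positive_preimage_of_indep_abs_cont:
  fixes M :: "'w measure"
  assumes "prob_space M" and X: "X \<in> measurable M MX" and Y: "Y \<in> measurable M MY"
    and indep: "prob_space.indep_var M MX X MY Y"
    and ac: "absolutely_continuous \<nu> (distr M MX X \<Otimes>\<^sub>M distr M MY Y)"
    and sets_\<nu>: "sets \<nu> = sets (MX \<Otimes>\<^sub>M MY)"
    and g: "g \<in> measurable (MX \<Otimes>\<^sub>M MY) N" and U: "U \<in> sets N"
    and pos: "0 < emeasure (distr M N (\<lambda>\<omega>. g (X \<omega>, Y \<omega>))) U"
  shows "0 < emeasure \<nu> (g -` U \<inter> space (MX \<Otimes>\<^sub>M MY))"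
proof -
  interpret prob_space M by fact
  let ?W = "g -` U \<inter> space (MX \<Otimes>\<^sub>M MY)"
  have XY: "(\<lambda>\<omega>. (X \<omega>, Y \<omega>)) \<in> measurable M (MX \<Otimes>\<^sub>M MY)"
    using X Y by (rule measurable_Pair)
  have W: "?W \<in> sets (MX \<Otimes>\<^sub>M MY)"
    using g U by (rule measurable_sets)
  have "emeasure (distr M N (\<lambda>\<omega>. g (X \<omega>, Y \<omega>))) U = emeasure (distr M (MX \<Otimes>\<^sub>M MY) (\<lambda>\<omega>. (X \<omega>, Y \<omega>))) ?W"
    using measurable_space[OF XY] measurable_compose[OF XY g] U W
    by (simp add: emeasure_distr XY) (intro arg_cong[where f = "emeasure M"], auto)
  also have "\<dots> = emeasure (distr M MX X \<Otimes>\<^sub>M distr M MY Y) ?W"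
    using indep by (simp add: indep_var_distribution_eq)
  finally have "?W \<notin> null_sets (distr M MX X \<Otimes>\<^sub>M distr M MY Y)"
    using pos by auto
  then have "?W \<notin> null_sets \<nu>"
    using ac unfolding absolutely_continuous_def by blast
  then show ?thesis
    using W sets_\<nu> by (simp add: null_sets_def zero_less_iff_neq_zero)
qed

definition kron_chart :: "nat \<Rightarrow> nat \<Rightarrow> real \<Rightarrow> (nat \<Rightarrow> real) \<Rightarrow> (nat \<Rightarrow> real)" where
  "kron_chart k l c = (\<lambda>(x, y). kron k l x y) \<circ> slice_embedding (k - 1) l c"

lemma kron_chart_apply:
  assumes "k \<ge> 1" "j < k * l"
  shows "kron_chart k l c v j = (if j div l < k - 1 then v (j div l) else c) * v (k - 1 + j mod l)"
  using assms less_mult_imp_div_mod_less[of j k l]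
  by (auto simp: kron_chart_def slice_embedding_def kron_def)

definition unit_multiindex :: "nat \<Rightarrow> nat \<Rightarrow> nat" where
  "unit_multiindex p = (\<lambda>i. if i = p then 1 else 0)"

lemma unit_multiindex_neq: "i \<noteq> p \<Longrightarrow> unit_multiindex p i = 0"
  by (simp add: unit_multiindex_def)

lemma prod_power_unit_multiindex:
  fixes d :: "nat \<Rightarrow> real"
  assumes "p < s"
  shows "(\<Prod>i<s. d i ^ unit_multiindex p i) = d p"
proof -
  have "(\<Prod>i<s. d i ^ unit_multiindex p i) = (\<Prod>i<s. if i = p then d i else 1)"
    by (rule prod.cong) (auto simp: unit_multiindex_def)
  with assms show ?thesis
    by simp
qed

lemma power_series_scaled_coordinate:
  fixes z :: "nat \<Rightarrow> real"
  assumes "p < s"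
  shows "\<exists>a. \<forall>x. ((\<lambda>\<alpha>. a \<alpha> * (\<Prod>i<s. (x i - z i) ^ \<alpha> i)) has_sum (b * x p)) {\<alpha>. \<forall>i\<ge>s. \<alpha> i = 0}"
proof (intro exI allI)
  fix x :: "nat \<Rightarrow> real"
  let ?e = "unit_multiindex p"
  have "?e \<noteq> (\<lambda>_. 0)"
    by (auto simp: unit_multiindex_def fun_eq_iff)
  with assms show "((\<lambda>\<alpha>. (if \<alpha> = (\<lambda>_. 0) then b * z p else if \<alpha> = ?e then b else 0)
      * (\<Prod>i<s. (x i - z i) ^ \<alpha> i)) has_sum (b * x p)) {\<alpha>. \<forall>i\<ge>s. \<alpha> i = 0}"
    by (intro has_sum_finite_neutralI[of "{(\<lambda>_. 0), ?e}"])
      (auto simp: prod_power_unit_multiindex algebra_simps unit_multiindex_neq)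
qed

lemma power_series_coordinate_product:
  fixes z :: "nat \<Rightarrow> real"
  assumes "p < s" "q < s" "p \<noteq> q"
  shows "\<exists>a. \<forall>x. ((\<lambda>\<alpha>. a \<alpha> * (\<Prod>i<s. (x i - z i) ^ \<alpha> i)) has_sum (x q * x p)) {\<alpha>. \<forall>i\<ge>s. \<alpha> i = 0}"
proof (intro exI allI)
  fix x :: "nat \<Rightarrow> real"
  define e where "e = unit_multiindex"
  have "e p \<noteq> (\<lambda>_. 0)" "e q \<noteq> (\<lambda>_. 0)" "e q \<noteq> e p" "(\<lambda>i. e q i + e p i) \<noteq> (\<lambda>_. 0)"
     "(\<lambda>i. e q i + e p i) \<noteq> e p" "(\<lambda>i. e q i + e p i) \<noteq> e q"
    using assms by (auto simp: e_def unit_multiindex_def fun_eq_iff)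
  with assms show "((\<lambda>\<alpha>. (if \<alpha> = (\<lambda>_. 0) then z q * z p else if \<alpha> = e q then z p else if \<alpha> = e p then z q
      else if \<alpha> = (\<lambda>i. e q i + e p i) then 1 else 0) * (\<Prod>i<s. (x i - z i) ^ \<alpha> i))
    has_sum (x q * x p)) {\<alpha>. \<forall>i\<ge>s. \<alpha> i = 0}"
    by (intro has_sum_finite_neutralI[of "{(\<lambda>_. 0), e q, e p, (\<lambda>i. e q i + e p i)}"])
      (auto simp: power_add prod.distrib prod_power_unit_multiindex algebra_simps e_def
        unit_multiindex_neq)
qed

lemma real_analytic_kron_chart:
  assumes "k \<ge> 1"
  shows "real_analytic (k - 1 + l) (k * l) (kron_chart k l c)"
  unfolding real_analytic_def
proof (intro ballI exI[of _ 1] conjI allI impI)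
  fix x0 :: "nat \<Rightarrow> real" and j assume j: "j < k * l"
  define q where "q = j div l"
  define p where "p = k - 1 + j mod l"
  have p: "p < k - 1 + l"
    using less_mult_imp_div_mod_less[OF j] unfolding p_def by linarith
  have component: "kron_chart k l c x j = (if q < k - 1 then x q else c) * x p" for x
    using kron_chart_apply[OF assms j] by (simp add: p_def q_def)
  show "\<exists>a. \<forall>x\<in>RR (k - 1 + l). (\<forall>i<k - 1 + l. \<bar>x i - x0 i\<bar> < 1) \<longrightarrow>
      ((\<lambda>\<alpha>. a \<alpha> * (\<Prod>i<k - 1 + l. (x i - x0 i) ^ \<alpha> i)) has_sum kron_chart k l c x j)
        {\<alpha>. \<forall>i\<ge>k - 1 + l. \<alpha> i = 0}"
  proof (cases "q < k - 1")
    case True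
    then have "q < k - 1 + l" "p \<noteq> q"
      by (auto simp: p_def)
    with True show ?thesis
      using power_series_coordinate_product[OF p, of q x0] by (auto simp: component)
  next
    case False
    then show ?thesis
      using power_series_scaled_coordinate[OF p, of x0 c]
      by (auto simp: component)
  qed
qed simp

lemma deriv_if_mult_if:
  assumes "\<not> (A \<and> B)"
  shows "deriv (\<lambda>t::real. (if A then t else a) * (if B then t else b)) x
    = (if A then b else 0) + (if B then a else 0)"
proof -
  have "((\<lambda>t::real. (if A then t else a) * (if B then t else b)) has_field_derivative
      (if A then b else 0) + (if B then a else 0)) (at x)"
    using assms by (cases A; cases B) (auto intro!: derivative_eq_intros)
  then show ?thesis
    by (rule DERIV_imp_deriv)
qed

lemma Dmat_kron_chart:
  assumes "k \<ge> 1" "j < k * l"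
  shows "Dmat s (kron_chart k l c) v j i =
     (if j div l < k - 1 \<and> j div l = i then v (k - 1 + j mod l) else 0)
     + (if k - 1 + j mod l = i then (if j div l < k - 1 then v (j div l) else c) else 0)"
proof -
  have "(\<lambda>t. kron_chart k l c (v(i := t)) j)
      = (\<lambda>t. (if j div l < k - 1 \<and> j div l = i then t else (if j div l < k - 1 then v (j div l) else c))
        * (if k - 1 + j mod l = i then t else v (k - 1 + j mod l)))"
    by (auto simp: kron_chart_apply[OF assms])
  then show ?thesis
    unfolding Dmat_def by (simp add: deriv_if_mult_if)
qed

definition basis_vector :: "nat \<Rightarrow> nat \<Rightarrow> nat \<Rightarrow> real" where
  "basis_vector n p = (\<lambda>i\<in>{..<n}. if i = p then 1 else 0)"

text \<open>The row in which column i of the differential of kron_chart k l c at the basis vector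
  e_(k-1) has its only nonzero entry.\<close>

definition pivot_row :: "nat \<Rightarrow> nat \<Rightarrow> nat \<Rightarrow> nat" where
  "pivot_row k l i = (if i < k - 1 then i * l else (k - 1) * l + (i - (k - 1)))"

lemma eq_mult_add_iff_div_mod: "b < (l::nat) \<Longrightarrow> j = a * l + b \<longleftrightarrow> j div l = a \<and> j mod l = b"
  by (metis add.commute div_mult_self1 div_less less_nat_zero_code mod_mult_self2 mod_less
      div_mult_mod_eq mult.commute add_0_left)

lemma pivot_row_inverse:
  assumes "0 < l" "i < k - 1 + l"
  shows "(if pivot_row k l i div l < k - 1 then pivot_row k l i div l else k - 1 + pivot_row k l i mod l) = i"
proof (cases "i < k - 1")
  case True
  then show ?thesis
    using eq_mult_add_iff_div_mod[OF assms(1), of "pivot_row k l i" i] by (simp add: pivot_row_def)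
next
  case False
  then have "i - (k - 1) < l"
    using assms(2) by linarith
  with False show ?thesis
    using eq_mult_add_iff_div_mod[of "i - (k - 1)" l "pivot_row k l i" "k - 1"]
    by (simp add: pivot_row_def)
qed

lemma pivot_row_less:
  assumes "k \<ge> 1" "0 < l" "i < k - 1 + l"
  shows "pivot_row k l i < k * l"
proof -
  have "pivot_row k l i < (k - 1) * l + l"
  proof (cases "i < k - 1")
    case True
    then have "pivot_row k l i = i * l"
      by (simp add: pivot_row_def)
    also have "\<dots> < (k - 1) * l"
      using True assms(2) by simp
    finally show ?thesis
      by simp
  qed (use assms in \<open>auto simp: pivot_row_def\<close>)
  also have "\<dots> = k * l"
    using assms(1) by (cases k) auto
  finally show ?thesis .
qed

lemma Dmat_kron_chart_basis:
  assumes "k \<ge> 1" "0 < l" "j < k * l" "i < k - 1 + l" "k - 1 + l \<le> n"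
  shows "Dmat s (kron_chart k l c) (basis_vector n (k - 1)) j i
    = (if j = pivot_row k l i then (if i < k - 1 then 1 else c) else 0)"
proof -
  let ?q = "j div l" and ?r = "j mod l"
  have j: "?q < k" "?r < l"
    using less_mult_imp_div_mod_less[OF assms(3)] by auto
  have e: "basis_vector n (k - 1) (k - 1 + ?r) = (if ?r = 0 then 1 else 0)"
    "?q < k - 1 \<Longrightarrow> basis_vector n (k - 1) ?q = 0"
    using j assms(5) by (auto simp: basis_vector_def)
  show ?thesis
  proof (cases "i < k - 1")
    case True
    then have "j = pivot_row k l i \<longleftrightarrow> ?q = i \<and> ?r = 0"
      using eq_mult_add_iff_div_mod[OF assms(2), of j i] by (simp add: pivot_row_def)
    with True e show ?thesis
      unfolding Dmat_kron_chart[OF assms(1,3)] by auto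
  next
    case False
    then have "j = pivot_row k l i \<longleftrightarrow> ?q = k - 1 \<and> ?r = i - (k - 1)"
      using eq_mult_add_iff_div_mod[of "i - (k - 1)" l j "k - 1"] assms(4)
      by (simp add: pivot_row_def)
    also have "\<dots> \<longleftrightarrow> ?q = k - 1 \<and> k - 1 + ?r = i"
      using False by linarith
    finally have pivot: "j = pivot_row k l i \<longleftrightarrow> ?q = k - 1 \<and> k - 1 + ?r = i" .
    show ?thesis
    proof (cases "?q = k - 1 \<and> k - 1 + ?r = i")
      case True
      with False pivot show ?thesis
        unfolding Dmat_kron_chart[OF assms(1,3)] by simp
    next
      case False': False
      then have "j \<noteq> pivot_row k l i"
        using pivot by blast
      moreover have "\<not> (?q < k - 1 \<and> ?q = i)"
        using False by auto
      moreover have "k - 1 + ?r = i \<Longrightarrow> ?q < k - 1"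
        using False' j(1) by auto
      ultimately show ?thesis
        unfolding Dmat_kron_chart[OF assms(1,3)] using e(2) by auto
    qed
  qed
qed

lemma inj_on_pivot_row: "0 < l \<Longrightarrow> inj_on (pivot_row k l) {..<k - 1 + l}"
  by (rule inj_on_inverseI[where g = "\<lambda>r. if r div l < k - 1 then r div l else k - 1 + r mod l"])
    (rule pivot_row_inverse, simp_all)

lemma detn_cong:
  assumes "\<And>i i'. i < n \<Longrightarrow> i' < n \<Longrightarrow> A i i' = B i i'"
  shows "detn n A = detn n B"
  unfolding detn_def
proof (rule sum.cong[OF refl])
  fix p assume "p \<in> {p. p permutes {..<n}}"
  then have "i < n \<Longrightarrow> p i < n" for i
    using permutes_in_image by fastforce
  then show "of_int (sign p) * (\<Prod>i<n. A i (p i)) = of_int (sign p) * (\<Prod>i<n. B i (p i))"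
    using assms by (auto intro!: prod.cong)
qed

lemma detn_diagonal: "detn n (\<lambda>i i'. if i = i' then d i else 0) = (\<Prod>i<n. d i)"
proof -
  let ?P = "{p. p permutes {..<n}}"
  have "of_int (sign p) * (\<Prod>i<n. if i = p i then d i else 0) = 0" if "p \<in> ?P - {id}" for p
  proof -
    from that obtain i where "p i \<noteq> i"
      by (metis DiffE eq_id_iff singletonI)
    moreover from that this have "i < n"
      by (auto simp: permutes_def)
    ultimately show ?thesis
      by (auto intro!: bexI[of _ i])
  qed
  then have "(\<Sum>p\<in>?P - {id}. of_int (sign p) * (\<Prod>i<n. if i = p i then d i else 0)) = 0"
    by (rule sum.neutral[OF ballI])
  then show ?thesis
    unfolding detn_def by (subst sum.remove[of _ id]) (auto simp: finite_permutations permutes_id sign_id)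
qed

lemma Jac_kron_chart_basis:
  assumes k: "k \<ge> 1" and l: "l \<ge> 1" and c: "c \<noteq> 0"
  shows "Jac (k - 1 + l) (k * l) (kron_chart k l c) (basis_vector (k - 1 + l) (k - 1)) \<noteq> 0"
proof -
  define s where "s = k - 1 + l"
  define D where "D = Dmat s (kron_chart k l c) (basis_vector s (k - 1))"
  define w where "w i = (if i < k - 1 then 1 else c)" for i
  have D_eq: "D j i = (if j = pivot_row k l i then w i else 0)" if "j < k * l" "i < s" for j i
    using Dmat_kron_chart_basis[OF k _ that[unfolded s_def] order.refl] l by (simp add: D_def s_def w_def)
  have gram: "(\<Sum>j<k * l. D j i * D j i') = (if i = i' then w i ^ 2 else 0)"
    if "i < s" "i' < s" for i i'
  proof -
    have "(\<Sum>j<k * l. D j i * D j i')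
        = (\<Sum>j<k * l. if j = pivot_row k l i then (if i = i' then w i ^ 2 else 0) else 0)"
      using that l inj_on_pivot_row[of l k]
      by (intro sum.cong) (auto simp: D_eq power2_eq_square inj_on_def s_def)
    also have "\<dots> = (if i = i' then w i ^ 2 else 0)"
      using pivot_row_less[OF k _ that(1)[unfolded s_def]] l by simp
    finally show ?thesis .
  qed
  have "detn s (\<lambda>i i'. \<Sum>j<k * l. D j i * D j i') = (\<Prod>i<s. w i ^ 2)"
    by (simp add: detn_cong[OF gram] detn_diagonal)
  moreover have "(\<Prod>i<s. w i ^ 2) > 0"
    using c by (intro prod_pos) (auto simp: w_def)
  moreover have "s \<le> k * l"
    using k l unfolding s_def by (cases k; cases l) auto
  ultimately show ?thesis
    unfolding s_def[symmetric] using c by (simp add: Jac_def Let_def D_def w_def)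
qed

lemma analytic_chart_into_kron_preimage:
  assumes k: "k \<ge> 1" and l: "l \<ge> 1" and U: "U \<in> sets (borel_n (k * l))"
    and pos: "0 < emeasure (lebesgue_n k \<Otimes>\<^sub>M lebesgue_n l)
      ((\<lambda>p. kron k l (fst p) (snd p)) -` U \<inter> space (borel_n k \<Otimes>\<^sub>M borel_n l))"
  shows "\<exists>A\<in>sets (borel_n (k - 1 + l)). 0 < emeasure (lebesgue_n (k - 1 + l)) A \<and>
    (\<exists>h. real_analytic (k - 1 + l) (k * l) h \<and> (\<exists>v\<in>RR (k - 1 + l). Jac (k - 1 + l) (k * l) h v \<noteq> 0)
      \<and> h ` A \<subseteq> U)"
proof -
  define W where "W = (\<lambda>p. kron k l (fst p) (snd p)) -` U \<inter> space (borel_n k \<Otimes>\<^sub>M borel_n l)"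
  have k_Suc: "Suc (k - 1) = k"
    using k by simp
  have "W \<in> sets (borel_n k \<Otimes>\<^sub>M borel_n l)"
    unfolding W_def using measurable_kron U by (rule measurable_sets)
  then have W: "W \<in> sets (lebesgue_n (Suc (k - 1)) \<Otimes>\<^sub>M lebesgue_n l)"
    unfolding k_Suc sets_pair_measure_cong[OF sets_lebesgue_n sets_lebesgue_n] .
  have "0 < emeasure (lebesgue_n (Suc (k - 1)) \<Otimes>\<^sub>M lebesgue_n l) W"
    using pos unfolding W_def k_Suc .
  then obtain c where c: "c \<noteq> 0"
    and A_pos: "0 < emeasure (lebesgue_n (k - 1 + l)) (slice_embedding (k - 1) l c -` W \<inter> space (lebesgue_n (k - 1 + l)))"
    using exists_nonzero_slice_positive[OF W] by blast
  define A where "A = slice_embedding (k - 1) l c -` W \<inter> space (lebesgue_n (k - 1 + l))"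
  have "A \<in> sets (lebesgue_n (k - 1 + l))"
    unfolding A_def using measurable_slice_embedding W by (rule measurable_sets)
  moreover have "kron_chart k l c ` A \<subseteq> U"
    by (auto simp: A_def W_def kron_chart_def)
  moreover have "basis_vector (k - 1 + l) (k - 1) \<in> RR (k - 1 + l)"
    by (simp add: basis_vector_def)
  ultimately show ?thesis
    using A_pos[folded A_def] real_analytic_kron_chart[OF k] Jac_kron_chart_basis[OF k l c]
    unfolding sets_lebesgue_n by blast
qed

theorem lemma13:
  fixes M :: "'w measure" and k l :: nat
    and a b :: "'w \<Rightarrow> (nat \<Rightarrow> real)"
  assumes "prob_space M"
    and "k \<ge> 1" and "l \<ge> 1"
    and "a \<in> measurable M (borel_n k)"
    and "b \<in> measurable M (borel_n l)"
    and "prob_space.indep_var M (borel_n k) a (borel_n l) b"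
    and "absolutely_continuous (lebesgue_n k \<Otimes>\<^sub>M lebesgue_n l)
           (distr M (borel_n k) a \<Otimes>\<^sub>M distr M (borel_n l) b)"
  shows "s_analytic (k + l - 1) (k * l)
           (distr M (borel_n (k * l)) (\<lambda>\<omega>. kron k l (a \<omega>) (b \<omega>)))"
proof -
  have "0 < emeasure (lebesgue_n k \<Otimes>\<^sub>M lebesgue_n l)
      ((\<lambda>p. kron k l (fst p) (snd p)) -` U \<inter> space (borel_n k \<Otimes>\<^sub>M borel_n l))"
    if "U \<in> sets (borel_n (k * l))" "0 < emeasure (distr M (borel_n (k * l)) (\<lambda>\<omega>. kron k l (a \<omega>) (b \<omega>))) U"
    for U
    using positive_preimage_of_indep_abs_cont[OF assms(1,4-7)
        sets_pair_measure_cong[OF sets_lebesgue_n sets_lebesgue_n] measurable_kron that(1)] that(2)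
    by simp
  moreover have "k + l - 1 = k - 1 + l" "k - 1 + l \<le> k * l"
    using assms(2,3) by (cases k; cases l; simp)+
  ultimately show ?thesis
    using assms(2,3) analytic_chart_into_kron_preimage unfolding s_analytic_def by auto
qed

end
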